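(* For all $n\ge1$, $\lfloor n/\varphi\rfloor+1\le f(n)\le\lfloor n\varphi\rfloor$, where $\varphi=(1+\sqrt5)/2$.
   Context: $\mathbb{N}=\{0,1,2,\dots\}$. The sequence $f:\mathbb{N}\to\mathbb{N}$ is defined greedily: $f(0)=0$, and for $n\ge1$, $f(n)$ is the least natural number such that (i) $f(n)\notin\{f(0),f(1),\dots,f(n-1)\}$ and (ii) $\sum_{1\le i\le n} f(i)$ is divisible by $n$. *)

theory Defs
  imports Complex_Main
begin

fun pref :: "nat \<Rightarrow> nat list" where
  "pref 0 = [0]"
| "pref (Suc n) = pref n @
     [LEAST m. m \<notin> set (pref n) \<and> Suc n dvd ((\<Sum>i\<in>{1..n}. pref n ! i) + m)]"

definition f :: "nat \<Rightarrow> nat" where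
  "f n = last (pref n)"

definition phi :: real where
  "phi = (1 + sqrt 5) / 2"

end

theory Submission
  imports Defs "HOL-Number_Theory.Cong"
begin

text \<open>Write \<open>b(n) = \<lfloor>n/\<phi>\<rfloor>\<close> and call \<open>n \<ge> 1\<close> a jump if \<open>b(n) = b(n-1) + 1\<close>. The greedy
  sequence has the closed form \<open>f(n) = n + b(n)\<close> at jumps and \<open>f(n) = b(n) + 1\<close> otherwise.
  Indeed, this gives \<open>f(1) + \<dots> + f(n) = n (b(n) + 1)\<close>, so the next term must be congruent to
  \<open>b(n) + 1\<close> modulo \<open>n + 1\<close>; the greedy choice is \<open>b(n) + 1\<close> if that value is still unused
  and \<open>(n + 1) + b(n) + 1\<close> otherwise, and Beatty-type estimates based on \<open>\<phi>\<^sup>2 = \<phi> + 1\<close>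
  and the irrationality of \<open>\<phi>\<close> show that \<open>b(n) + 1\<close> is already used exactly when \<open>n + 1\<close>
  is a jump. The bounds follow since \<open>\<lfloor>n\<phi>\<rfloor> = n + b(n)\<close>, as \<open>\<phi> = 1 + 1/\<phi>\<close>.\<close>

lemma phi_square: "phi * phi = phi + 1"
proof -
  have "sqrt (5::real) * sqrt 5 = 5" by simp
  then show ?thesis by (simp add: phi_def algebra_simps)
qed

lemma phi_gt: "3/2 < phi" and phi_lt: "phi < 2"
proof -
  have "2 < sqrt (5::real)" by (rule real_less_rsqrt) simp
  moreover have "sqrt (5::real) < 3" by (rule real_less_lsqrt) simp_all
  ultimately show "3/2 < phi" "phi < 2" by (auto simp: phi_def)
qed

lemma phi_pos: "0 < phi"
  using phi_gt by simp

lemma mult_phi_le_iff: "x * phi \<le> y \<longleftrightarrow> (x + y) * phi \<le> x + 2 * y"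
proof -
  have "(2 - phi) * (x * phi - y) = x * phi + y * phi - x * (phi * phi - phi) - 2 * y"
    by (simp add: algebra_simps)
  also have "\<dots> = (x + y) * phi - (x + 2 * y)"
    by (simp add: phi_square algebra_simps)
  finally have "(x + y) * phi \<le> x + 2 * y \<longleftrightarrow> (2 - phi) * (x * phi - y) \<le> 0"
    by linarith
  moreover have "0 < 2 - phi"
    using phi_lt by simp
  ultimately show ?thesis
    by (simp add: mult_le_0_iff)
qed

text \<open>Irrationality of \<open>phi\<close>: a solution of \<open>m\<^sup>2 = m j + j\<^sup>2\<close> descends to the smaller
  solution \<open>(j, m - j)\<close>, as for consecutive Fibonacci numbers.\<close>

lemma golden_equation_no_positive_solution:
  fixes m j :: int
  assumes "m\<^sup>2 = m * j + j\<^sup>2" and "0 \<le> m" and "0 < j"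
  shows False
  using assms
proof (induction "nat j" arbitrary: m j rule: less_induct)
  case less
  have "j < m"
  proof (rule ccontr)
    assume "\<not> j < m"
    then have "m * m \<le> m * j"
      using \<open>0 \<le> m\<close> by (simp add: mult_left_mono)
    then show False
      using less.prems by (simp add: power2_eq_square) (meson mult_pos_pos not_le)
  qed
  moreover have "m < 2 * j"
  proof (rule ccontr)
    assume "\<not> m < 2 * j"
    then have "2 * j * j \<le> m * (m - j)"
      using \<open>0 < j\<close> by (intro mult_mono) auto
    then show False
      using less.prems by (simp add: power2_eq_square algebra_simps)
  qed
  moreover have "j\<^sup>2 = j * (m - j) + (m - j)\<^sup>2"
    using less.prems by (simp add: power2_eq_square algebra_simps)
  ultimately show False
    using less.hyps[of "m - j" j] less.prems by simp
qed

lemma of_nat_mult_phi_neq_of_nat: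
  assumes "0 < j"
  shows "real j * phi \<noteq> real m"
proof
  assume "real j * phi = real m"
  then have "real m * real m = real m * real j + real j * real j"
    using phi_square by (metis distrib_left mult.assoc mult.commute mult.right_neutral)
  then have "(int m)\<^sup>2 = int m * int j + (int j)\<^sup>2"
    by (simp add: power2_eq_square flip: of_nat_mult of_nat_add)
  then show False
    using assms golden_equation_no_positive_solution[of "int m" "int j"] by simp
qed

definition floor_div_phi :: "nat \<Rightarrow> nat" where
  "floor_div_phi m = nat \<lfloor>real m / phi\<rfloor>"

lemma int_floor_div_phi: "int (floor_div_phi m) = \<lfloor>real m / phi\<rfloor>"
  using phi_pos by (simp add: floor_div_phi_def)

lemma floor_mult_phi: "\<lfloor>real n * phi\<rfloor> = int n + \<lfloor>real n / phi\<rfloor>"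
proof -
  have "phi = 1 + 1 / phi"
    using phi_square phi_pos by (simp add: field_simps)
  then have "real n * phi = real n * (1 + 1 / phi)"
    by (rule arg_cong)
  also have "\<dots> = real n + real n / phi"
    by (simp add: distrib_left)
  finally show ?thesis
    by (metis floor_add_int of_int_of_nat_eq add.commute)
qed

lemma floor_div_phi_mult_le: "real (floor_div_phi m) * phi \<le> real m"
proof -
  have "real (floor_div_phi m) \<le> real m / phi"
    using of_int_floor_le[of "real m / phi"] by (simp flip: int_floor_div_phi)
  then show ?thesis
    using phi_pos by (simp add: pos_le_divide_eq)
qed

lemma less_Suc_floor_div_phi_mult: "real m < (real (floor_div_phi m) + 1) * phi"
proof -
  have "real m / phi < real (floor_div_phi m) + 1"
    using real_of_int_floor_add_one_gt[of "real m / phi"] by (simp flip: int_floor_div_phi)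
  then show ?thesis
    using phi_pos by (simp add: pos_divide_less_eq)
qed

lemma floor_div_phi_eqI:
  assumes "real j * phi \<le> real m" and "real m < (real j + 1) * phi"
  shows "floor_div_phi m = j"
proof -
  have "\<lfloor>real m / phi\<rfloor> = int j"
    using assms phi_pos by (intro floor_unique) (simp_all add: pos_le_divide_eq pos_divide_less_eq)
  then show ?thesis
    by (simp add: floor_div_phi_def)
qed

lemma floor_div_phi_mult_less:
  assumes "0 < m"
  shows "real (floor_div_phi m) * phi < real m"
proof (cases "floor_div_phi m = 0")
  case False
  then have "real (floor_div_phi m) * phi \<noteq> real m"
    by (intro of_nat_mult_phi_neq_of_nat) simp
  then show ?thesis
    using floor_div_phi_mult_le[of m] by linarith
qed (use assms in simp)

lemma floor_div_phi_less: "0 < m \<Longrightarrow> floor_div_phi m < m"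
  using floor_div_phi_mult_less[of m] phi_gt mult_left_mono[of 1 phi "real (floor_div_phi m)"]
  by simp

lemma floor_div_phi_mono: "m \<le> m' \<Longrightarrow> floor_div_phi m \<le> floor_div_phi m'"
  unfolding floor_div_phi_def using phi_pos
  by (intro nat_mono floor_mono divide_right_mono) auto

lemma floor_div_phi_0: "floor_div_phi 0 = 0"
  by (simp add: floor_div_phi_def)

lemma floor_div_phi_1: "floor_div_phi 1 = 0"
  using phi_gt by (intro floor_div_phi_eqI) simp_all

lemma floor_div_phi_Suc:
  "floor_div_phi (Suc m) = floor_div_phi m \<or> floor_div_phi (Suc m) = floor_div_phi m + 1"
proof -
  have "real (floor_div_phi (Suc m)) * phi < (real (floor_div_phi m) + 2) * phi"
    using floor_div_phi_mult_le[of "Suc m"] less_Suc_floor_div_phi_mult[of m] phi_gt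
    by (simp add: algebra_simps)
  then have "floor_div_phi (Suc m) < floor_div_phi m + 2"
    using phi_pos by simp
  then show ?thesis
    using floor_div_phi_mono[of m "Suc m"] by linarith
qed

lemma floor_div_phi_less_Suc_Suc: "floor_div_phi m < floor_div_phi (Suc (Suc m))"
proof -
  have "(real (floor_div_phi m) + 1) * phi < (real (floor_div_phi (Suc (Suc m))) + 1) * phi"
    using floor_div_phi_mult_le[of m] phi_lt less_Suc_floor_div_phi_mult[of "Suc (Suc m)"]
    by (simp add: algebra_simps)
  then show ?thesis
    using phi_pos by simp
qed

definition jumps_at :: "nat \<Rightarrow> bool" where
  "jumps_at n \<longleftrightarrow> 0 < n \<and> floor_div_phi n = floor_div_phi (n - 1) + 1"

lemma jumps_at_iff:
  assumes "0 < n"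
  shows "jumps_at n \<longleftrightarrow> real n - 1 < real (floor_div_phi n) * phi"
proof -
  obtain m where n: "n = Suc m"
    using assms gr0_implies_Suc by blast
  show ?thesis
    using floor_div_phi_Suc[of m]
  proof
    assume "floor_div_phi (Suc m) = floor_div_phi m"
    then show ?thesis
      using floor_div_phi_mult_le[of m] by (simp add: n jumps_at_def)
  next
    assume "floor_div_phi (Suc m) = floor_div_phi m + 1"
    then show ?thesis
      using less_Suc_floor_div_phi_mult[of m] by (simp add: n jumps_at_def add.commute)
  qed
qed

lemma jumps_at_Suc_if_not_jumps_at:
  assumes "0 < n" and "\<not> jumps_at n"
  shows "jumps_at (Suc n)"
proof -
  have "floor_div_phi n = floor_div_phi (n - 1)"
    using assms floor_div_phi_Suc[of "n - 1"] by (simp add: jumps_at_def)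
  moreover have "floor_div_phi (n - 1) < floor_div_phi (Suc n)"
    using assms floor_div_phi_less_Suc_Suc[of "n - 1"] by simp
  ultimately show ?thesis
    using floor_div_phi_Suc[of n] by (auto simp: jumps_at_def)
qed

lemma floor_div_phi_eq_and_jumps_atI:
  assumes "0 < k" and "real j * phi \<le> real k" and "real k - 1 < real j * phi"
  shows "floor_div_phi k = j \<and> jumps_at k"
proof -
  have "real k < (real j + 1) * phi"
    using assms(3) phi_gt by (simp add: algebra_simps)
  with assms(2) have "floor_div_phi k = j"
    by (rule floor_div_phi_eqI)
  then show ?thesis
    using assms jumps_at_iff by simp
qed

lemma jump_sum_ne_Suc_floor_div_phi_of_non_jump:
  assumes "jumps_at k" and "0 < n" and "\<not> jumps_at n"
  shows "k + floor_div_phi k \<noteq> floor_div_phi n + 1"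
proof
  define j J where "j = floor_div_phi k" and "J = floor_div_phi n"
  assume "k + floor_div_phi k = floor_div_phi n + 1"
  then have J: "real J = real j + real k - 1"
    by (simp add: j_def J_def)
  have "0 < k"
    using assms(1) by (simp add: jumps_at_def)
  have "(real j + real k) * phi \<le> real j + 2 * real k"
    using floor_div_phi_mult_le[of k] mult_phi_le_iff[of "real j" "real k"] by (simp add: j_def J_def)
  moreover have "\<not> (real j + (real k - 1)) * phi \<le> real j + 2 * (real k - 1)"
    using assms(1) \<open>0 < k\<close> mult_phi_le_iff[of "real j" "real k - 1"]
    by (simp add: jumps_at_iff j_def J_def)
  moreover have "real J * phi \<le> real n - 1"
    using assms(2,3) by (simp add: jumps_at_iff J_def)
  moreover have "real n < (real J + 1) * phi"
    using less_Suc_floor_div_phi_mult[of n] by (simp add: J_def)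
  \<comment> \<open>\<open>n\<close> would lie strictly between the consecutive integers \<open>j + 2k - 1\<close> and \<open>j + 2k\<close>\<close>
  ultimately have "real (j + 2 * k) < real (n + 1)" "real n < real (j + 2 * k)"
    using J by (simp_all add: algebra_simps)
  then show False
    unfolding of_nat_less_iff by linarith
qed

lemma obtain_jump_sum_eq_Suc_floor_div_phi:
  assumes "1 < n" and "jumps_at n" and "jumps_at (Suc n)"
  obtains k where "k \<le> n" and "jumps_at k" and "k + floor_div_phi k = floor_div_phi n + 1"
proof -
  define J where "J = floor_div_phi n"
  have n_lo: "real n - 1 < real J * phi"
    using assms(1,2) by (simp add: jumps_at_iff J_def)
  have "J < n"
    using assms(1) floor_div_phi_less by (simp add: J_def)
  moreover have "n < 2 * J + 1"
    using n_lo phi_lt mult_left_mono[of phi 2 "real J"] by linarith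
  moreover have "(real J + 1) * phi < real n + 1"
    using assms(3) floor_div_phi_mult_less[of "Suc n"] by (simp add: jumps_at_def J_def add.commute)
  ultimately have "floor_div_phi (n - J) = 2 * J + 1 - n \<and> jumps_at (n - J)"
    using n_lo mult_phi_le_iff[of "real (2 * J + 1 - n)" "real (n - J)"]
      mult_phi_le_iff[of "real (2 * J + 1 - n)" "real (n - J) - 1"]
    by (intro floor_div_phi_eq_and_jumps_atI) (simp_all add: algebra_simps)
  then show ?thesis
    using \<open>J < n\<close> \<open>n < 2 * J + 1\<close> by (intro that[of "n - J"]) (auto simp: J_def)
qed

definition f_closed :: "nat \<Rightarrow> nat" where
  "f_closed i = (if i = 0 then 0
     else if jumps_at i then i + floor_div_phi i else floor_div_phi i + 1)"

lemma f_closed_le: "f_closed i \<le> i + floor_div_phi i"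
  by (simp add: f_closed_def)

lemma f_closed_Suc:
  "f_closed (Suc n) =
     (if jumps_at (Suc n) then Suc n + (floor_div_phi n + 1) else floor_div_phi n + 1)"
  using floor_div_phi_Suc[of n] by (auto simp: f_closed_def jumps_at_def)

lemma sum_f_closed: "(\<Sum>i=1..n. f_closed i) = n * (floor_div_phi n + 1)"
proof (induction n)
  case (Suc n)
  have "(\<Sum>i=1..Suc n. f_closed i) = n * (floor_div_phi n + 1) + f_closed (Suc n)"
    using Suc by (simp add: sum.atLeast1_atMost_eq)
  also have "\<dots> = Suc n * (floor_div_phi (Suc n) + 1)"
    using floor_div_phi_Suc[of n] by (auto simp: f_closed_Suc jumps_at_def)
  finally show ?case .
qed simp

lemma value_taken_iff_jumps_at_Suc:
  assumes "0 < n"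
  shows "floor_div_phi n + 1 \<in> f_closed ` {..n} \<longleftrightarrow> jumps_at (Suc n)"
proof
  assume jump: "jumps_at (Suc n)"
  show "floor_div_phi n + 1 \<in> f_closed ` {..n}"
  proof (cases "jumps_at n")
    case True
    have "n \<noteq> 1"
      using True floor_div_phi_0 floor_div_phi_1 by (auto simp: jumps_at_def)
    with assms have "1 < n"
      by simp
    then obtain k where "k \<le> n" "jumps_at k" "k + floor_div_phi k = floor_div_phi n + 1"
      using True jump by (rule obtain_jump_sum_eq_Suc_floor_div_phi)
    then show ?thesis
      by (auto simp: f_closed_def jumps_at_def intro!: image_eqI[of _ _ k])
  next
    case False
    then show ?thesis
      using assms by (auto simp: f_closed_def intro!: image_eqI[of _ _ n])
  qed
next
  assume "floor_div_phi n + 1 \<in> f_closed ` {..n}"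
  then obtain i where i: "i \<le> n" "f_closed i = floor_div_phi n + 1"
    by auto
  then have "0 < i"
    by (cases "i = 0") (auto simp: f_closed_def)
  show "jumps_at (Suc n)"
  proof (rule ccontr)
    assume no_jump: "\<not> jumps_at (Suc n)"
    then have b_Suc: "floor_div_phi (Suc n) = floor_div_phi n"
      using floor_div_phi_Suc[of n] by (auto simp: jumps_at_def)
    show False
    proof (cases "jumps_at i")
      case True
      then show False
        using i \<open>0 < i\<close> no_jump b_Suc jump_sum_ne_Suc_floor_div_phi_of_non_jump[of i "Suc n"]
        by (simp add: f_closed_def)
    next
      case False
      then have "jumps_at (Suc i)"
        using \<open>0 < i\<close> by (rule jumps_at_Suc_if_not_jumps_at[rotated])
      moreover have "floor_div_phi (Suc i) \<le> floor_div_phi (Suc n)"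
        using i by (intro floor_div_phi_mono) simp
      ultimately show False
        using i False \<open>0 < i\<close> b_Suc by (simp add: f_closed_def jumps_at_def)
    qed
  qed
qed

lemma Suc_dvd_iff_mod_eq: "Suc n dvd n * v + m \<longleftrightarrow> m mod Suc n = v mod Suc n"
proof -
  have "Suc n dvd n * v + m \<longleftrightarrow> [n * v + m + v = v] (mod Suc n)"
    by (simp add: cong_add_rcancel_0_nat cong_0_iff)
  also have "n * v + m + v = m + v * Suc n"
    by simp
  finally show ?thesis
    by (simp only: cong_def mod_mult_self1)
qed

lemma Least_not_in_mod_eq:
  fixes U :: "nat set"
  assumes "v < N" and "v + N \<notin> U"
  shows "(LEAST m. m \<notin> U \<and> m mod N = v) = (if v \<in> U then v + N else v)"
proof (cases "v \<in> U")
  case True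
  have "v + N \<le> m" if "m \<notin> U" "m mod N = v" for m
  proof -
    have m: "m = v + N * (m div N)"
      using that(2) div_mult_mod_eq[of m N] by (simp add: mult.commute)
    moreover have "m div N \<noteq> 0"
      using True that(1) m by (metis add.right_neutral mult_0_right)
    then have "N \<le> N * (m div N)"
      by simp
    ultimately show ?thesis
      by linarith
  qed
  then show ?thesis
    using True assms by (intro Least_equality) auto
qed (use assms in \<open>auto intro!: Least_equality\<close>)

lemma Least_f_closed:
  "(LEAST m. m \<notin> f_closed ` {..n} \<and> Suc n dvd n * (floor_div_phi n + 1) + m) = f_closed (Suc n)"
proof (cases "n = 0")
  case True
  have "(LEAST m. m \<noteq> 0) = (1::nat)"
    by (rule Least_equality) auto
  then show ?thesis
    using True floor_div_phi_1 by (simp add: f_closed_def jumps_at_def f_closed_le)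
next
  case False
  define v where "v = floor_div_phi n + 1"
  have "v < Suc n"
    using False floor_div_phi_less[of n] by (simp add: v_def)
  moreover have "v + Suc n \<notin> f_closed ` {..n}"
  proof
    assume "v + Suc n \<in> f_closed ` {..n}"
    then obtain i where "i \<le> n" "f_closed i = v + Suc n"
      by auto
    then show False
      using f_closed_le[of i] floor_div_phi_mono[of i n] by (simp add: v_def)
  qed
  ultimately have "(LEAST m. m \<notin> f_closed ` {..n} \<and> m mod Suc n = v)
      = (if v \<in> f_closed ` {..n} then v + Suc n else v)"
    by (rule Least_not_in_mod_eq)
  also have "\<dots> = f_closed (Suc n)"
    using False value_taken_iff_jumps_at_Suc[of n] by (simp add: v_def f_closed_Suc)
  finally show ?thesis
    unfolding v_def[symmetric] Suc_dvd_iff_mod_eq using \<open>v < Suc n\<close> by simp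
qed

lemma pref_eq_map_f_closed: "pref n = map f_closed [0..<Suc n]"
proof (induction n)
  case (Suc n)
  have "(\<Sum>i=1..n. pref n ! i) = (\<Sum>i=1..n. f_closed i)"
    using Suc by (intro sum.cong) (auto simp del: upt_Suc)
  moreover have "set (pref n) = f_closed ` {..n}"
    using Suc by (simp add: lessThan_Suc_atMost atLeast0LessThan del: upt_Suc)
  ultimately have "pref (Suc n) = pref n @ [f_closed (Suc n)]"
    by (simp only: pref.simps sum_f_closed Least_f_closed)
  then show ?case
    using Suc by simp
qed (simp add: f_closed_def)

lemma f_eq_f_closed: "f n = f_closed n"
  by (simp add: f_def pref_eq_map_f_closed)

theorem corollary5:
  fixes n :: nat
  assumes "n \<ge> 1"
  shows "\<lfloor>real n / phi\<rfloor> + 1 \<le> int (f n) \<and> int (f n) \<le> \<lfloor>real n * phi\<rfloor>"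
  using assms by (auto simp: f_eq_f_closed f_closed_def floor_mult_phi simp flip: int_floor_div_phi)

end
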